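(* Let $a>0$, $\alpha\in[0,1)$ and $f\in\mathcal C_a$. Then the function $\mathrm{Sh}_\alpha(f)$ is convex.
   Context: $\mathcal C_a$ is the set of $C^1$ functions $f:\mathbb R\to\mathbb R$ that are even, satisfy $f(s)=|s|$ for $|s|\ge a$ and are strictly convex on $[-a,a]$. For $f\in\mathcal C_a$: $F_\alpha(s)=f(s)-\alpha s$, $x_\alpha^+=(f')^{-1}(\alpha)\in[0,a)$ (inverse of $f':[-a,a]\to[-1,1]$); $F_\alpha$ decreases on $(-\infty,x_\alpha^+]$ and increases on $[x_\alpha^+,\infty)$. Let $F_\alpha^{-1}$ be the inverse of $F_\alpha|_{[x_\alpha^+,\infty)}$, $\phi=F_\alpha^{-1}\circ F_\alpha$, $\delta_x=(1-\alpha)^{-1}F_\alpha(x)-\phi(x)$, $s_\alpha=x_\alpha^++\delta_{x_\alpha^+}$; $x\mapsto x+\delta_x$ is an increasing bijection $(-\infty,x_\alpha^+]\to(-\infty,s_\alpha]$ with inverse $\tau$. Define $\mathrm{Sh}_\alpha(f)(x)=\alpha x+F_\alpha(\tau(x))$ for $x\le s_\alpha$ and $=x$ for $x>s_\alpha$. *)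

theory Defs
  imports "HOL-Analysis.Analysis"
begin

definition strictly_convex_on :: "real set \<Rightarrow> (real \<Rightarrow> real) \<Rightarrow> bool" where
  "strictly_convex_on S f \<longleftrightarrow>
     (\<forall>x\<in>S. \<forall>y\<in>S. x \<noteq> y \<longrightarrow> (\<forall>t. 0 < t \<and> t < 1 \<longrightarrow>
        f ((1 - t) * x + t * y) < (1 - t) * f x + t * f y))"

definition classC :: "real \<Rightarrow> (real \<Rightarrow> real) set" where
  "classC a = {f. f C1_differentiable_on UNIV \<and> (\<forall>s. f (- s) = f s)
      \<and> (\<forall>s. a \<le> \<bar>s\<bar> \<longrightarrow> f s = \<bar>s\<bar>) \<and> strictly_convex_on {-a..a} f}"

definition Falpha :: "real \<Rightarrow> (real \<Rightarrow> real) \<Rightarrow> real \<Rightarrow> real" where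
  "Falpha \<alpha> f s = f s - \<alpha> * s"

definition xplus :: "real \<Rightarrow> real \<Rightarrow> (real \<Rightarrow> real) \<Rightarrow> real" where
  "xplus a \<alpha> f = (THE x. x \<in> {-a..a} \<and> deriv f x = \<alpha>)"

definition phi :: "real \<Rightarrow> real \<Rightarrow> (real \<Rightarrow> real) \<Rightarrow> real \<Rightarrow> real" where
  "phi a \<alpha> f x = the_inv_into {xplus a \<alpha> f..} (Falpha \<alpha> f) (Falpha \<alpha> f x)"

definition delta :: "real \<Rightarrow> real \<Rightarrow> (real \<Rightarrow> real) \<Rightarrow> real \<Rightarrow> real" where
  "delta a \<alpha> f x = Falpha \<alpha> f x / (1 - \<alpha>) - phi a \<alpha> f x"

definition salpha :: "real \<Rightarrow> real \<Rightarrow> (real \<Rightarrow> real) \<Rightarrow> real" where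
  "salpha a \<alpha> f = xplus a \<alpha> f + delta a \<alpha> f (xplus a \<alpha> f)"

definition tau :: "real \<Rightarrow> real \<Rightarrow> (real \<Rightarrow> real) \<Rightarrow> real \<Rightarrow> real" where
  "tau a \<alpha> f = the_inv_into {..xplus a \<alpha> f} (\<lambda>x. x + delta a \<alpha> f x)"

definition Sh :: "real \<Rightarrow> real \<Rightarrow> (real \<Rightarrow> real) \<Rightarrow> real \<Rightarrow> real" where
  "Sh a \<alpha> f x = (if x \<le> salpha a \<alpha> f then \<alpha> * x + Falpha \<alpha> f (tau a \<alpha> f x) else x)"

end

theory Submission
  imports Defs
begin

(* Write Sh_alpha(f)(y) = alpha y + tilted_Sh(y). Then tilted_Sh(y) = (1 - alpha) y for
   y >= s_alpha and tilted_Sh(y) = F_alpha(tau y) for y <= s_alpha, so tilted_Sh attains its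
   minimum F_alpha(x_alpha^+) at s_alpha and is convex as soon as it is convex on both half-lines.
   Put g x = x + delta_x. If the level V of F_alpha is attained at t <= x_alpha^+, then
   g t = t - phi t + V / (1 - alpha), where t and phi t are the left and right roots of F_alpha = V.
   By convexity of F_alpha, a convex combination of levels has its left root below and its right
   root above the corresponding combinations of roots, so g(t) is at most the convex combination
   of the g(t_i). As g is increasing (F_alpha has slope at most 1 - alpha) and F_alpha decreases
   left of x_alpha^+, this gives tilted_Sh(y) <= V for the convex combination y of the g(t_i). *)

lemma convex_on_glue_at_min:
  fixes G :: "real \<Rightarrow> real"
  assumes left: "convex_on {..s} G" and right: "convex_on {s..} G"
    and min: "\<And>x. G s \<le> G x"
  shows "convex_on UNIV G"
proof (rule convex_on_linorderI)
  have shift_weight: "G z \<le> (1 - t) * G p + t * G q"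
    if z: "G z \<le> (1 - \<mu>) * G p + \<mu> * G s" and t: "0 \<le> t" "t \<le> \<mu>" for z p q t \<mu>
  proof -
    have "(1 - \<mu>) * G p + \<mu> * G s = (1 - t) * G p + t * G s - (\<mu> - t) * (G p - G s)"
      by (simp add: algebra_simps)
    also have "\<dots> \<le> (1 - t) * G p + t * G s"
      using t min[of p] by simp
    also have "\<dots> \<le> (1 - t) * G p + t * G q"
      using t min[of q] by (simp add: mult_left_mono)
    finally show ?thesis using z by linarith
  qed
  fix t x y :: real
  assume t: "0 < t" "t < 1" and "x < y"
  define z where "z = (1 - t) * x + t * y"
  have tz: "t = (z - x) / (y - x)" "1 - t = (y - z) / (y - x)"
    using \<open>x < y\<close> by (simp_all add: z_def field_simps)
  have "t * x < t * y" "(1 - t) * x < (1 - t) * y"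
    using t \<open>x < y\<close> by simp_all
  then have "x < z" "z < y"
    by (simp_all add: z_def algebra_simps)
  consider "y \<le> s" | "s \<le> x" | "x < s" "s < y" "z \<le> s" | "x < s" "s < y" "s \<le> z"
    by linarith
  then have "G z \<le> (1 - t) * G x + t * G y"
  proof cases
    case 1
    then show ?thesis using convex_onD[OF left, of t x y] t \<open>x < y\<close> by (simp add: z_def)
  next
    case 2
    then show ?thesis using convex_onD[OF right, of t x y] t \<open>x < y\<close> by (simp add: z_def)
  next
    case 3
    define \<mu> where "\<mu> = (z - x) / (s - x)"
    have "\<mu> * (s - x) = z - x" "0 \<le> \<mu>" "\<mu> \<le> 1"
      using 3 \<open>x < z\<close> by (simp_all add: \<mu>_def)
    then have "z = (1 - \<mu>) * x + \<mu> * s" "0 \<le> \<mu>" "\<mu> \<le> 1"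
      by (simp_all add: algebra_simps)
    then have "G z \<le> (1 - \<mu>) * G x + \<mu> * G s"
      using convex_onD[OF left, of \<mu> x s] 3 by simp
    moreover have "t \<le> \<mu>"
      unfolding tz(1) \<mu>_def using 3 \<open>x < z\<close> \<open>z < y\<close> by (intro divide_left_mono) auto
    ultimately show ?thesis using shift_weight t by simp
  next
    case 4
    define \<mu> where "\<mu> = (y - z) / (y - s)"
    have "\<mu> * (y - s) = y - z" "0 \<le> \<mu>" "\<mu> \<le> 1"
      using 4 \<open>z < y\<close> by (simp_all add: \<mu>_def)
    then have "z = (1 - \<mu>) * y + \<mu> * s" "0 \<le> \<mu>" "\<mu> \<le> 1"
      by (simp_all add: algebra_simps)
    then have "G z \<le> (1 - \<mu>) * G y + \<mu> * G s"
      using convex_onD[OF right, of \<mu> y s] 4 by simp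
    moreover have "1 - t \<le> \<mu>"
      unfolding tz(2) \<mu>_def using 4 \<open>x < z\<close> \<open>z < y\<close> by (intro divide_left_mono) auto
    ultimately have "G z \<le> t * G y + (1 - t) * G x"
      using shift_weight[where p = y and q = x and t = "1 - t"] t by simp
    then show ?thesis by linarith
  qed
  then show "G ((1 - t) *\<^sub>R x + t *\<^sub>R y) \<le> (1 - t) * G x + t * G y"
    by (simp add: z_def)
qed simp

lemma slope_sym: "((u::real) - v) / (p - q) = (v - u) / (q - p)"
  using minus_divide_divide[of "v - u" "q - p"] by simp

lemma deriv_le_slope_if_convex_on:
  fixes f :: "real \<Rightarrow> real"
  assumes f: "convex_on S f" "x \<in> S" "y \<in> S" and "x < y"
    and deriv: "(f has_real_derivative d) (at x)"
  shows "d \<le> (f y - f x) / (y - x)"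
proof (rule tendsto_upperbound)
  show "((\<lambda>z. (f z - f x) / (z - x)) \<longlongrightarrow> d) (at_right x)"
    using has_field_derivative_at_within[OF deriv, of "{x<..}"]
    by (simp add: has_field_derivative_iff)
  show "\<forall>\<^sub>F z in at_right x. (f z - f x) / (z - x) \<le> (f y - f x) / (y - x)"
  proof (rule eventually_at_rightI)
    fix z assume "z \<in> {x<..<y}"
    then have "(f x - f z) / (x - z) \<le> (f x - f y) / (x - y)"
      by (intro convex_on_slope_le(1)[OF f]) auto
    then show "(f z - f x) / (z - x) \<le> (f y - f x) / (y - x)"
      using slope_sym[of "f x" "f z" x z] slope_sym[of "f x" "f y" x y] by linarith
  qed fact
qed simp

lemma slope_le_deriv_if_convex_on:
  fixes f :: "real \<Rightarrow> real"
  assumes f: "convex_on S f" "x \<in> S" "y \<in> S" and "x < y"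
    and deriv: "(f has_real_derivative d) (at y)"
  shows "(f y - f x) / (y - x) \<le> d"
proof (rule tendsto_lowerbound)
  show "((\<lambda>z. (f z - f y) / (z - y)) \<longlongrightarrow> d) (at_left y)"
    using has_field_derivative_at_within[OF deriv, of "{..<y}"]
    by (simp add: has_field_derivative_iff)
  show "\<forall>\<^sub>F z in at_left y. (f y - f x) / (y - x) \<le> (f z - f y) / (z - y)"
  proof (rule eventually_at_leftI)
    fix z assume "z \<in> {x<..<y}"
    then have "(f x - f y) / (x - y) \<le> (f z - f y) / (z - y)"
      by (intro convex_on_slope_le(2)[OF f]) auto
    then show "(f y - f x) / (y - x) \<le> (f z - f y) / (z - y)"
      using slope_sym[of "f x" "f y" x y] by linarith
  qed fact
qed simp

lemma convex_on_if_strictly_convex_on: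
  assumes "strictly_convex_on S f" "convex S"
  shows "convex_on S f"
proof (rule convex_on_linorderI)
  fix t x y :: real
  assume "0 < t" "t < 1" "x \<in> S" "y \<in> S" "x < y"
  then show "f ((1 - t) *\<^sub>R x + t *\<^sub>R y) \<le> (1 - t) * f x + t * f y"
    using assms(1) unfolding strictly_convex_on_def by (auto intro: less_imp_le)
qed fact
locale class_C_shift =
  fixes a \<alpha> :: real and f D :: "real \<Rightarrow> real"
  assumes a_pos: "0 < a" and alpha_nonneg: "0 \<le> \<alpha>" and alpha_less_1: "\<alpha> < 1"
    and f_deriv: "\<And>x. (f has_real_derivative D x) (at x)"
    and D_cont: "continuous_on UNIV D"
    and f_outside: "\<And>s. a \<le> \<bar>s\<bar> \<Longrightarrow> f s = \<bar>s\<bar>"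
    and f_strictly_convex: "strictly_convex_on {-a..a} f"
begin

lemma D_right: "a \<le> x \<Longrightarrow> D x = 1"
proof (rule has_field_derivative_unique)
  assume "a \<le> x"
  show "((\<lambda>s. s) has_real_derivative D x) (at x within {x..})"
    using has_field_derivative_at_within[OF f_deriv]
    by (rule has_field_derivative_transform_within[where d = 1])
      (use \<open>a \<le> x\<close> a_pos f_outside in auto)
qed (simp_all add: at_within_Ici_at_right)

lemma D_left: "x \<le> -a \<Longrightarrow> D x = -1"
proof (rule has_field_derivative_unique)
  assume "x \<le> -a"
  show "((\<lambda>s. - s) has_real_derivative D x) (at x within {..x})"
    using has_field_derivative_at_within[OF f_deriv]
    by (rule has_field_derivative_transform_within[where d = 1])
      (use \<open>x \<le> -a\<close> a_pos f_outside in auto)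
  show "((\<lambda>s. - s) has_real_derivative -1) (at x within {..x})"
    by (auto intro!: derivative_eq_intros)
qed (simp add: at_within_Iic_at_left)

lemma D_strict_mono: "-a \<le> x \<Longrightarrow> x < y \<Longrightarrow> y \<le> a \<Longrightarrow> D x < D y"
proof -
  assume xy: "-a \<le> x" "x < y" "y \<le> a"
  have cvx: "convex_on {-a..a} f"
    using f_strictly_convex by (rule convex_on_if_strictly_convex_on) simp
  define m where "m = (x + y) / 2"
  have m: "x < m" "m < y" "y - m = m - x"
    using xy by (simp_all add: m_def field_simps)
  have "f ((1 - 1/2) * x + (1/2) * y) < (1 - 1/2) * f x + (1/2) * f y"
    by (rule f_strictly_convex[unfolded strictly_convex_on_def, rule_format]) (use xy in auto)
  then have "f m - f x < f y - f m"
    by (simp add: m_def field_simps)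
  then have slopes: "(f m - f x) / (m - x) < (f y - f m) / (y - m)"
    using m by (simp add: divide_strict_right_mono)
  have "D x \<le> (f m - f x) / (m - x)"
    by (rule deriv_le_slope_if_convex_on[OF cvx _ _ _ f_deriv]) (use xy m in auto)
  also have "\<dots> < (f y - f m) / (y - m)"
    by (fact slopes)
  also have "\<dots> \<le> D y"
    by (rule slope_le_deriv_if_convex_on[OF cvx _ _ _ f_deriv]) (use xy m in auto)
  finally show ?thesis .
qed

lemma D_clamp: "D x = D (max (-a) (min a x))"
  using D_left[of x] D_right[of x] D_left[of "-a"] D_right[of a] a_pos
  by (cases "x \<le> -a"; cases "a \<le> x") auto

lemma D_mono: "x \<le> y \<Longrightarrow> D x \<le> D y"
proof -
  assume "x \<le> y"
  define cx cy where "cx = max (-a) (min a x)" and "cy = max (-a) (min a y)"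
  have "-a \<le> cx" "cx \<le> cy" "cy \<le> a"
    using \<open>x \<le> y\<close> a_pos by (auto simp: cx_def cy_def)
  then have "D cx \<le> D cy"
    using D_strict_mono[of cx cy] by (cases "cx = cy") auto
  then show ?thesis
    using D_clamp[of x] D_clamp[of y] by (simp add: cx_def cy_def)
qed

lemma D_le_1: "D x \<le> 1"
  using D_mono[of x "max x a"] D_right[of "max x a"] by simp

abbreviation "xp \<equiv> xplus a \<alpha> f"
abbreviation "F \<equiv> Falpha \<alpha> f"

lemma D_eq_alpha_unique: "\<exists>!x. x \<in> {-a..a} \<and> D x = \<alpha>"
proof -
  have "D (-a) \<le> \<alpha>" "\<alpha> \<le> D a" "-a \<le> a"
    using D_left[of "-a"] D_right[of a] a_pos alpha_nonneg alpha_less_1 by simp_all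
  then obtain x where "x \<in> {-a..a}" "D x = \<alpha>"
    using IVT'[of D "-a" \<alpha> a] continuous_on_subset[OF D_cont] by auto
  moreover have "y = x" if "y \<in> {-a..a}" "D y = \<alpha>" for y
    using D_strict_mono[of x y] D_strict_mono[of y x] that \<open>x \<in> {-a..a}\<close> \<open>D x = \<alpha>\<close>
    by (cases x y rule: linorder_cases) auto
  ultimately show ?thesis by blast
qed

lemma xp_bounds: "-a < xp" "xp < a" and D_xp: "D xp = \<alpha>"
proof -
  have "deriv f = D"
    using DERIV_imp_deriv[OF f_deriv] by blast
  then have "xp \<in> {-a..a}" "D xp = \<alpha>"
    using theI'[OF D_eq_alpha_unique] by (simp_all add: xplus_def)
  moreover have "D (-a) \<noteq> \<alpha>" "D a \<noteq> \<alpha>"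
    using D_left[of "-a"] D_right[of a] alpha_nonneg alpha_less_1 by simp_all
  ultimately show "-a < xp" "xp < a" "D xp = \<alpha>"
    by (auto simp: order.order_iff_strict)
qed

lemma D_less_alpha: "x < xp \<Longrightarrow> D x < \<alpha>"
  using D_strict_mono[of x xp] D_left[of x] D_xp xp_bounds alpha_nonneg
  by (cases "-a \<le> x") auto

lemma D_greater_alpha: "xp < x \<Longrightarrow> \<alpha> < D x"
  using D_strict_mono[of xp x] D_right[of x] D_xp xp_bounds alpha_less_1
  by (cases "x \<le> a") auto

lemma F_deriv: "(F has_real_derivative D x - \<alpha>) (at x)"
  unfolding Falpha_def[abs_def] by (auto intro!: derivative_eq_intros f_deriv)

lemma F_cont: "continuous_on S F"
  using F_deriv by (meson DERIV_isCont continuous_at_imp_continuous_on)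

lemma F_convex: "convex_on UNIV F"
  by (rule convex_on_realI[OF _ F_deriv]) (auto intro: D_mono)

lemma F_right: "a \<le> s \<Longrightarrow> F s = (1 - \<alpha>) * s"
  using f_outside[of s] a_pos by (simp add: Falpha_def algebra_simps)

lemma F_left: "s \<le> -a \<Longrightarrow> F s = - (1 + \<alpha>) * s"
  using f_outside[of s] a_pos by (simp add: Falpha_def algebra_simps)

lemma F_strict_antimono_left: "x < y \<Longrightarrow> y \<le> xp \<Longrightarrow> F y < F x"
proof (rule DERIV_neg_imp_decreasing_open[where f = F])
  fix z assume "z < y" "y \<le> xp"
  then show "\<exists>d. (F has_real_derivative d) (at z) \<and> d < 0"
    using F_deriv[of z] D_less_alpha[of z] by auto
qed (auto intro: F_cont)

lemma F_strict_mono_right: "xp \<le> x \<Longrightarrow> x < y \<Longrightarrow> F x < F y"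
proof (rule DERIV_pos_imp_increasing_open[where f = F])
  fix z assume "xp \<le> x" "x < z"
  then show "\<exists>d. (F has_real_derivative d) (at z) \<and> 0 < d"
    using F_deriv[of z] D_greater_alpha[of z] by auto
qed (auto intro: F_cont)

lemma F_le_iff_left: "x \<le> xp \<Longrightarrow> y \<le> xp \<Longrightarrow> F x \<le> F y \<longleftrightarrow> y \<le> x"
  using F_strict_antimono_left[of x y] F_strict_antimono_left[of y x]
  by (cases x y rule: linorder_cases) auto

lemma F_le_iff_right: "xp \<le> x \<Longrightarrow> xp \<le> y \<Longrightarrow> F x \<le> F y \<longleftrightarrow> x \<le> y"
  using F_strict_mono_right[of x y] F_strict_mono_right[of y x]
  by (cases x y rule: linorder_cases) auto

lemma F_min: "F xp \<le> F x"
  using F_le_iff_left[of x xp] F_le_iff_right[of xp x] by (cases "x \<le> xp") auto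

lemma F_increment_le: "p \<le> q \<Longrightarrow> F q - F p \<le> (1 - \<alpha>) * (q - p)"
proof -
  assume "p \<le> q"
  have "(1 - \<alpha>) * p - F p \<le> (1 - \<alpha>) * q - F q"
  proof (rule DERIV_nonneg_imp_nondecreasing[OF \<open>p \<le> q\<close>])
    fix z
    have "((\<lambda>x. (1 - \<alpha>) * x - F x) has_real_derivative 1 - D z) (at z)"
      by (auto intro!: derivative_eq_intros F_deriv)
    then show "\<exists>d. ((\<lambda>x. (1 - \<alpha>) * x - F x) has_real_derivative d) (at z) \<and> 0 \<le> d"
      using D_le_1[of z] by auto
  qed
  then show ?thesis by (simp add: algebra_simps)
qed

abbreviation "\<phi> \<equiv> phi a \<alpha> f"

lemma F_level_right: "F xp \<le> v \<Longrightarrow> \<exists>u. xp \<le> u \<and> F u = v"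
proof -
  assume v: "F xp \<le> v"
  define b where "b = max a (v / (1 - \<alpha>))"
  have "v = (1 - \<alpha>) * (v / (1 - \<alpha>))"
    using alpha_less_1 by simp
  also have "\<dots> \<le> (1 - \<alpha>) * b"
    using alpha_less_1 by (intro mult_left_mono) (auto simp: b_def)
  also have "\<dots> = F b"
    using F_right[of b] by (simp add: b_def)
  finally have "\<exists>u. xp \<le> u \<and> u \<le> b \<and> F u = v"
    using v xp_bounds by (intro IVT' F_cont) (auto simp: b_def)
  then show ?thesis by auto
qed

lemma F_inj_right: "inj_on F {xp..}"
proof (rule inj_onI)
  fix u v assume "u \<in> {xp..}" "v \<in> {xp..}" "F u = F v"
  then show "u = v"
    using F_le_iff_right[of u v] F_le_iff_right[of v u] by auto
qed

lemma phi_eqI: "xp \<le> u \<Longrightarrow> F u = F x \<Longrightarrow> \<phi> x = u"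
  unfolding phi_def by (rule the_inv_into_f_eq[OF F_inj_right]) auto

lemma phi_ge_xp: "xp \<le> \<phi> x" and F_phi: "F (\<phi> x) = F x"
proof -
  obtain u where "xp \<le> u" "F u = F x"
    using F_level_right[OF F_min[of x]] by blast
  then show "xp \<le> \<phi> x" "F (\<phi> x) = F x"
    using phi_eqI by simp_all
qed

lemma phi_xp: "\<phi> xp = xp"
  by (rule phi_eqI) auto

lemma phi_continuous: "c \<le> xp \<Longrightarrow> continuous_on {c..xp} \<phi>"
proof -
  assume "c \<le> xp"
  define b where "b = \<phi> c"
  have inj: "inj_on F {xp..b}"
    using F_inj_right by (rule inj_on_subset) auto
  have phi_range: "\<phi> x \<in> {xp..b}" if "x \<in> {c..xp}" for x
    using phi_ge_xp F_phi F_le_iff_left[of x c] F_le_iff_right[of "\<phi> x" b] that \<open>c \<le> xp\<close>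
    by (auto simp: b_def)
  have "continuous_on {c..xp} (the_inv_into {xp..b} F \<circ> F)"
  proof (rule continuous_on_compose[OF F_cont continuous_on_subset])
    show "continuous_on (F ` {xp..b}) (the_inv_into {xp..b} F)"
      by (rule continuous_on_inv_into[OF F_cont compact_Icc inj])
    show "F ` {c..xp} \<subseteq> F ` {xp..b}"
    proof
      fix v assume "v \<in> F ` {c..xp}"
      then obtain x where "x \<in> {c..xp}" "v = F (\<phi> x)"
        using F_phi by fastforce
      then show "v \<in> F ` {xp..b}"
        using phi_range by blast
    qed
  qed
  moreover have "(the_inv_into {xp..b} F \<circ> F) x = \<phi> x" if "x \<in> {c..xp}" for x
    using the_inv_into_f_eq[OF inj, of "\<phi> x" "F x"] phi_range[OF that] F_phi by simp
  ultimately show ?thesis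
    by (rule continuous_on_eq) simp
qed

abbreviation "g \<equiv> \<lambda>x. x + delta a \<alpha> f x"

lemma g_eq: "g x = x + F x / (1 - \<alpha>) - \<phi> x"
  by (simp add: delta_def)

lemma g_strict_mono: "x < y \<Longrightarrow> y \<le> xp \<Longrightarrow> g x < g y"
proof -
  assume xy: "x < y" "y \<le> xp"
  have "\<phi> y \<le> \<phi> x"
    using phi_ge_xp F_phi F_le_iff_right[of "\<phi> y" "\<phi> x"] F_strict_antimono_left[OF xy] xy
    by simp
  then have "F x - F y \<le> (1 - \<alpha>) * (\<phi> x - \<phi> y)"
    using F_increment_le[of "\<phi> y" "\<phi> x"] phi_ge_xp F_phi xy by simp
  then have "(F x - F y) / (1 - \<alpha>) \<le> \<phi> x - \<phi> y"
    using alpha_less_1 by (simp add: pos_divide_le_eq mult.commute)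
  then have "F x / (1 - \<alpha>) - \<phi> x \<le> F y / (1 - \<alpha>) - \<phi> y"
    by (simp add: diff_divide_distrib)
  then show ?thesis
    unfolding g_eq using xy by linarith
qed

lemma g_le_iff: "x \<le> xp \<Longrightarrow> y \<le> xp \<Longrightarrow> g x \<le> g y \<longleftrightarrow> x \<le> y"
  using g_strict_mono[of x y] g_strict_mono[of y x] by (cases x y rule: linorder_cases) auto

lemma g_left: "x \<le> -a \<Longrightarrow> g x = x"
proof -
  assume x: "x \<le> -a"
  define u where "u = F x / (1 - \<alpha>)"
  have "(1 - \<alpha>) * a \<le> (1 + \<alpha>) * (- x)"
    using x a_pos alpha_nonneg by (intro mult_mono) auto
  then have "a \<le> u"
    using F_left[OF x] alpha_less_1 by (simp add: u_def field_simps)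
  then have "F u = F x"
    using F_right[of u] alpha_less_1 by (simp add: u_def)
  then have "\<phi> x = u"
    using phi_eqI[of u x] \<open>a \<le> u\<close> xp_bounds by simp
  then show ?thesis
    by (simp add: g_eq u_def)
qed

lemma g_continuous: "c \<le> xp \<Longrightarrow> continuous_on {c..xp} g"
  unfolding g_eq using alpha_less_1 by (intro continuous_intros F_cont phi_continuous) auto

abbreviation "sa \<equiv> salpha a \<alpha> f"
abbreviation "\<tau> \<equiv> tau a \<alpha> f"

lemma g_xp: "g xp = sa"
  by (simp add: salpha_def)

lemma sa_eq: "sa = F xp / (1 - \<alpha>)"
  using g_xp phi_xp by (simp add: g_eq)

lemma tau_g: "x \<le> xp \<Longrightarrow> \<tau> (g x) = x"
proof -
  have "inj_on g {..xp}"
  proof (rule inj_onI)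
    fix u v assume "u \<in> {..xp}" "v \<in> {..xp}" "g u = g v"
    then show "u = v" using g_le_iff[of u v] g_le_iff[of v u] by auto
  qed
  moreover assume "x \<le> xp"
  ultimately show ?thesis
    unfolding tau_def by (intro the_inv_into_f_eq) auto
qed

lemma
  assumes y: "y \<le> sa"
  shows tau_le_xp: "\<tau> y \<le> xp" and g_tau: "g (\<tau> y) = y"
proof -
  define c where "c = min y (-a)"
  have c: "c \<le> -a" "c \<le> y"
    by (simp_all add: c_def)
  then have "c \<le> xp" "g c \<le> y"
    using xp_bounds g_left[of c] by simp_all
  then obtain x where "x \<le> xp" "g x = y"
    using IVT'[of g c y xp] g_continuous[of c] y g_xp by auto
  then show "\<tau> y \<le> xp" "g (\<tau> y) = y"
    using tau_g by auto
qed

lemma g_le_convex_combination: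
  assumes t1: "t1 \<le> xp" and t2: "t2 \<le> xp" and t: "t \<le> xp" and \<theta>: "0 \<le> \<theta>" "\<theta> \<le> 1"
    and level: "F t = (1 - \<theta>) * F t1 + \<theta> * F t2"
  shows "g t \<le> (1 - \<theta>) * g t1 + \<theta> * g t2"
proof -
  define ts us where "ts = (1 - \<theta>) * t1 + \<theta> * t2" and "us = (1 - \<theta>) * \<phi> t1 + \<theta> * \<phi> t2"
  have "ts \<le> xp" "xp \<le> us"
    using convexD_alt[of "{..xp}" t1 t2 \<theta>] convexD_alt[of "{xp..}" "\<phi> t1" "\<phi> t2" \<theta>]
      t1 t2 \<theta> phi_ge_xp F_phi by (simp_all add: ts_def us_def)
  have "F ts \<le> F t"
    using convex_onD[OF F_convex, of \<theta> t1 t2] \<theta> level by (simp add: ts_def)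
  then have "t \<le> ts"
    using F_le_iff_left[OF \<open>ts \<le> xp\<close> t] by simp
  have "F us \<le> F (\<phi> t)"
    using convex_onD[OF F_convex, of \<theta> "\<phi> t1" "\<phi> t2"] \<theta> level phi_ge_xp F_phi
    by (simp add: us_def)
  then have "us \<le> \<phi> t"
    using F_le_iff_right[OF \<open>xp \<le> us\<close> phi_ge_xp] by simp
  have "(1 - \<theta>) * g t1 + \<theta> * g t2 = ts + F t / (1 - \<alpha>) - us"
    unfolding g_eq level ts_def us_def by (simp add: algebra_simps add_divide_distrib diff_divide_distrib)
  then show ?thesis
    using g_eq[of t] \<open>t \<le> ts\<close> \<open>us \<le> \<phi> t\<close> by linarith
qed

definition tilted_Sh :: "real \<Rightarrow> real" where
  "tilted_Sh y = Sh a \<alpha> f y - \<alpha> * y"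

lemma tilted_Sh_left: "y \<le> sa \<Longrightarrow> tilted_Sh y = F (\<tau> y)"
  by (simp add: tilted_Sh_def Sh_def)

lemma tau_sa: "\<tau> sa = xp"
  using tau_g[of xp] g_xp by simp

lemma tilted_Sh_right: "sa \<le> y \<Longrightarrow> tilted_Sh y = (1 - \<alpha>) * y"
proof (cases "y = sa")
  case True
  then show ?thesis
    using tilted_Sh_left[of sa] tau_sa sa_eq alpha_less_1 by simp
qed (auto simp: tilted_Sh_def Sh_def algebra_simps)

lemma tilted_Sh_min: "tilted_Sh sa \<le> tilted_Sh y"
proof (cases "y \<le> sa")
  case True
  then show ?thesis
    using tilted_Sh_left[of y] tilted_Sh_left[of sa] tau_sa F_min by simp
next
  case False
  then show ?thesis
    using tilted_Sh_right[of y] tilted_Sh_right[of sa] alpha_less_1 by simp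
qed

lemma tilted_Sh_convex_right: "convex_on {sa..} tilted_Sh"
proof (rule convex_onI)
  fix t x y :: real
  assume "0 < t" "t < 1" "x \<in> {sa..}" "y \<in> {sa..}"
  moreover have "(1 - t) * x + t * y \<in> {sa..}"
    using convexD_alt[of "{sa..}" x y t] calculation by simp
  ultimately have "tilted_Sh ((1 - t) * x + t * y) = (1 - \<alpha>) * ((1 - t) * x + t * y)"
    and "tilted_Sh x = (1 - \<alpha>) * x" "tilted_Sh y = (1 - \<alpha>) * y"
    using tilted_Sh_right by auto
  moreover have "(1 - \<alpha>) * ((1 - t) * x + t * y) = (1 - t) * ((1 - \<alpha>) * x) + t * ((1 - \<alpha>) * y)"
    by (simp add: algebra_simps)
  ultimately have "tilted_Sh ((1 - t) * x + t * y) = (1 - t) * tilted_Sh x + t * tilted_Sh y"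
    by simp
  then show "tilted_Sh ((1 - t) *\<^sub>R x + t *\<^sub>R y) \<le> (1 - t) * tilted_Sh x + t * tilted_Sh y"
    by simp
qed simp

lemma tilted_Sh_convex_left: "convex_on {..sa} tilted_Sh"
proof (rule convex_onI)
  fix \<theta> y1 y2 :: real
  assume \<theta>: "0 < \<theta>" "\<theta> < 1" and y12: "y1 \<in> {..sa}" "y2 \<in> {..sa}"
  define y t1 t2 where "y = (1 - \<theta>) * y1 + \<theta> * y2" and "t1 = \<tau> y1" and "t2 = \<tau> y2"
  define V where "V = (1 - \<theta>) * F t1 + \<theta> * F t2"
  have "y \<le> sa"
    using convexD_alt[of "{..sa}" y1 y2 \<theta>] y12 \<theta> by (simp add: y_def)
  have t1: "t1 \<le> xp" "g t1 = y1" and t2: "t2 \<le> xp" "g t2 = y2"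
    using tau_le_xp g_tau y12 by (auto simp: t1_def t2_def)
  have "F xp \<le> V"
    using convexD_alt[of "{F xp..}" "F t1" "F t2" \<theta>] \<theta> F_min by (simp add: V_def)
  moreover have "V \<le> F (min t1 t2)"
    using convex_bound_le[of "F t1" "F (min t1 t2)" "F t2" "1 - \<theta>" \<theta>] \<theta> t1 t2
      F_le_iff_left[of t1 "min t1 t2"] F_le_iff_left[of t2 "min t1 t2"] by (simp add: V_def)
  ultimately obtain t where t: "t \<le> xp" "F t = V"
    using IVT2'[of F xp V "min t1 t2"] F_cont t1(1) by (auto simp: min_le_iff_disj)
  then have "g t \<le> y"
    using g_le_convex_combination[OF t1(1) t2(1) t(1), of \<theta>] \<theta> t1 t2 by (simp add: V_def y_def)
  moreover note tau_le_xp[OF \<open>y \<le> sa\<close>] g_tau[OF \<open>y \<le> sa\<close>]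
  ultimately have "t \<le> \<tau> y"
    using g_le_iff[OF t(1)] by metis
  then have "tilted_Sh y \<le> V"
    using tilted_Sh_left[OF \<open>y \<le> sa\<close>] F_le_iff_left[OF tau_le_xp[OF \<open>y \<le> sa\<close>] t(1)] t(2) by simp
  then show "tilted_Sh ((1 - \<theta>) *\<^sub>R y1 + \<theta> *\<^sub>R y2) \<le> (1 - \<theta>) * tilted_Sh y1 + \<theta> * tilted_Sh y2"
    using tilted_Sh_left y12 by (simp add: y_def V_def t1_def t2_def)
qed simp

lemma Sh_convex: "convex_on UNIV (Sh a \<alpha> f)"
proof -
  have "convex_on UNIV tilted_Sh"
    using tilted_Sh_convex_left tilted_Sh_convex_right tilted_Sh_min by (rule convex_on_glue_at_min)
  then have "convex_on UNIV (\<lambda>y. tilted_Sh y + \<alpha> * y)"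
    using alpha_nonneg by (intro convex_on_add convex_on_cmul) (simp_all add: convex_on_ident)
  then show ?thesis
    by (simp add: tilted_Sh_def)
qed

end

theorem corollary4p14:
  fixes a \<alpha> :: real and f :: "real \<Rightarrow> real"
  assumes "a > 0" and "0 \<le> \<alpha>" and "\<alpha> < 1" and "f \<in> classC a"
  shows "convex_on UNIV (Sh a \<alpha> f)"
proof -
  from assms(4) obtain D where "\<And>x. (f has_vector_derivative D x) (at x)" "continuous_on UNIV D"
    unfolding classC_def C1_differentiable_on_def by auto
  with assms interpret class_C_shift a \<alpha> f D
    by unfold_locales (auto simp: classC_def has_real_derivative_iff_has_vector_derivative)
  show ?thesis
    by (fact Sh_convex)
qed

end
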